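(* Assume $2\pi/N\le\underline w$. There exists $C>0$ (independent of $\epsilon$) such that for every $\epsilon\in(0,\tfrac12]$ there exists a ReLU FNO $\mathcal{N}^{\mathrm{FNO}}$ on the grid of size $N$, with constant (in $x$) output, $k_{\max}=0$, $d_v\le C$ and depth $\le C\log(\epsilon^{-1})^2$, such that \[ \sup_{h,w,\xi}\big|\mathcal{N}^{\mathrm{FNO}}(\bar u)(x)-h\big|\le\epsilon\quad\text{for all }x, \] where $\bar u=h\,1_{[-w/2,w/2]}(\cdot-\xi)$ and the supremum is over $h\in[\underline h,\overline h]$, $w\in[\underline w,\overline w]$, $\xi\in[0,2\pi]$.
   Context: $\mathbb{T}=\mathbb{R}/2\pi\mathbb{Z}$; fixed $0<\underline h\le\overline h$, $0<\underline w\le\overline w<2\pi$; $1_{[-w/2,w/2]}$ periodized. FNO with grid size $N$: $x_j=2\pi j/N$, $\mathcal{F}_Nv(k)=\frac1N\sum_{j=1}^Nv(x_j)e^{-ikx_j}$; an FNO with lifting dimension $d_v$, cut-off $k_{\max}$, depth $L$, ReLU $\sigma$ is $Q\circ\mathcal{L}_L\circ\dots\circ\mathcal{L}_1\circ R$, $(R\bar u)(x)=R(\bar u(x),x)$ ($R$ a shallow ReLU network into $\mathbb{R}^{d_v}$), $(\mathcal{L}_\ell v)(x)=\sigma(W_\ell v(x)+b_\ell(x)+\sum_{|k|\le k_{\max}}P_\ell(k)\mathcal{F}_Nv(k)e^{ikx})$ with $W_\ell\in\mathbb{R}^{d_v\times d_v}$, $P_\ell(k)\in\mathbb{C}^{d_v\times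 d_v}$, real bias $b_\ell(x)=\sum_{|k|\le k_{\max}}\hat b_\ell(k)e^{ikx}$, $Q$ linear pointwise. Depth $=L$. *)

theory Defs
  imports "HOL-Analysis.Analysis"
begin

definition relu :: "real \<Rightarrow> real" where
  "relu t = max 0 t"

definition box_per :: "real \<Rightarrow> real \<Rightarrow> real" where
  "box_per w y = (if \<exists>n::int. \<bar>y - 2 * pi * of_int n\<bar> \<le> w / 2 then 1 else 0)"

definition grid_pt :: "nat \<Rightarrow> nat \<Rightarrow> real" where
  "grid_pt N j = 2 * pi * real j / real N"

definition dft :: "nat \<Rightarrow> (real \<Rightarrow> real) \<Rightarrow> int \<Rightarrow> complex" where
  "dft N v k = (1 / of_nat N) *
     (\<Sum>j\<in>{1..N}. complex_of_real (v (grid_pt N j)) * exp (- \<i> * of_int k * of_real (grid_pt N j)))"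

text \<open>Vectors in R^{d_v} are functions nat => real
  (only indices < d_v matter), matrices are nat => nat => _.\<close>
record fno =
  fno_dv :: nat
  fno_kmax :: nat
  fno_depth :: nat
  lift_width :: nat
  lift_au :: "nat \<Rightarrow> real"
  lift_ax :: "nat \<Rightarrow> real"
  lift_c1 :: "nat \<Rightarrow> real"
  lift_A2 :: "nat \<Rightarrow> nat \<Rightarrow> real"
  lift_c2 :: "nat \<Rightarrow> real"
  fno_W :: "nat \<Rightarrow> nat \<Rightarrow> nat \<Rightarrow> real"
  fno_bhat :: "nat \<Rightarrow> int \<Rightarrow> nat \<Rightarrow> complex"
  fno_P :: "nat \<Rightarrow> int \<Rightarrow> nat \<Rightarrow> nat \<Rightarrow> complex"
  fno_Q :: "nat \<Rightarrow> real"

definition fno_lift :: "fno \<Rightarrow> (real \<Rightarrow> real) \<Rightarrow> real \<Rightarrow> nat \<Rightarrow> real" where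
  "fno_lift F u x i =
     (\<Sum>r<lift_width F. lift_A2 F i r *
        relu (lift_au F r * u x + lift_ax F r * x + lift_c1 F r)) + lift_c2 F i"

text \<open>Fourier layer l. The bias b_l(x) is required to be real in the paper; we take
  the real part of the (complex) pre-activation, which agrees with the paper whenever
  the pre-activation is real.\<close>
definition fno_layer :: "fno \<Rightarrow> nat \<Rightarrow> nat \<Rightarrow> (real \<Rightarrow> nat \<Rightarrow> real) \<Rightarrow> real \<Rightarrow> nat \<Rightarrow> real" where
  "fno_layer F N l v x i = relu (
     (\<Sum>j<fno_dv F. fno_W F l i j * v x j) +
     Re (\<Sum>k\<in>{- int (fno_kmax F) .. int (fno_kmax F)}.
           (fno_bhat F l k i +
            (\<Sum>j<fno_dv F. fno_P F l k i j * dft N (\<lambda>y. v y j) k)) *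
           exp (\<i> * of_int k * of_real x)))"

fun fno_hidden :: "fno \<Rightarrow> nat \<Rightarrow> nat \<Rightarrow> (real \<Rightarrow> real) \<Rightarrow> real \<Rightarrow> nat \<Rightarrow> real" where
  "fno_hidden F N 0 u = fno_lift F u"
| "fno_hidden F N (Suc l) u = fno_layer F N l (fno_hidden F N l u)"

definition fno_eval :: "fno \<Rightarrow> nat \<Rightarrow> (real \<Rightarrow> real) \<Rightarrow> real \<Rightarrow> real" where
  "fno_eval F N u x = (\<Sum>i<fno_dv F. fno_Q F i * fno_hidden F N (fno_depth F) u x i)"

end

theory Submission imports Defs begin

text \<open>No approximation is needed: one Fourier layer with \<open>k\<^sub>m\<^sub>a\<^sub>x = 0\<close> and \<open>d\<^sub>v = N\<close>
  reproduces the height exactly. The input takes only the values \<open>0\<close> and \<open>h\<close>, so a ReLU bump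
  in \<open>x\<close> lets the lifting keep the input in channel \<open>i\<close> at the grid point \<open>x\<^sub>i\<^sub>+\<^sub>1\<close> and zero at
  all other grid points; the zeroth discrete Fourier coefficient, scaled by \<open>N\<close>, then yields the
  sample \<open>a\<^sub>i = u(x\<^sub>i\<^sub>+\<^sub>1)\<close> at every \<open>x\<close>. The layer outputs \<open>relu (a\<^sub>j - \<Sum>\<^sub>i\<^sub><\<^sub>j a\<^sub>i)\<close>, which is
  \<open>h\<close> at the first index with \<open>a\<^sub>j = h\<close> and \<open>0\<close> elsewhere, and since the grid spacing is at most
  the box width some sample does equal \<open>h\<close>.\<close>

definition box_fno :: "nat \<Rightarrow> real \<Rightarrow> fno" where
  "box_fno N D = \<lparr> fno_dv = N, fno_kmax = 0, fno_depth = 1, lift_width = 4 * N,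
     lift_au = (\<lambda>r. if r mod 4 < 2 then 1 else 0),
     lift_ax = (\<lambda>r. D * real N / (2 * pi)),
     lift_c1 = (\<lambda>r. - D * (real (r div 4) + 1 + real (r mod 2))),
     lift_A2 = (\<lambda>i r. (if r = 4*i then 1 else 0) - (if r = 4*i+1 then 1 else 0)
                    - (if r = 4*i+2 then 1 else 0) + (if r = 4*i+3 then 1 else 0)),
     lift_c2 = (\<lambda>i. 0),
     fno_W = (\<lambda>l i j. 0),
     fno_bhat = (\<lambda>l k i. 0),
     fno_P = (\<lambda>l k i j. complex_of_real (real N * (if j = i then 1 else if j < i then -1 else 0))),
     fno_Q = (\<lambda>i. 1) \<rparr>"

lemma box_fno_simps [simp]:
  "fno_dv (box_fno N D) = N" "fno_kmax (box_fno N D) = 0" "fno_depth (box_fno N D) = 1"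
  "fno_W (box_fno N D) l i j = 0" "fno_bhat (box_fno N D) l k i = 0"
  "fno_P (box_fno N D) l k i j = complex_of_real (real N * (if j = i then 1 else if j < i then -1 else 0))"
  "fno_Q (box_fno N D) i = 1"
  by (simp_all add: box_fno_def)

lemma sum_four_deltas:
  fixes g :: "nat \<Rightarrow> real"
  assumes "i < N"
  shows "(\<Sum>r<4*N. ((if r = 4*i then 1 else 0) - (if r = 4*i+1 then 1 else 0)
              - (if r = 4*i+2 then 1 else 0) + (if r = 4*i+3 then 1 else 0)) * g r)
     = g (4*i) - g (4*i+1) - g (4*i+2) + g (4*i+3)"
proof -
  have "(\<Sum>r<4*N. ((if r = 4*i then 1 else 0) - (if r = 4*i+1 then 1 else 0)
              - (if r = 4*i+2 then 1 else 0) + (if r = 4*i+3 then 1 else 0)) * g r)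
     = (\<Sum>r<4*N. (if r = 4*i then g r else 0)) - (\<Sum>r<4*N. (if r = 4*i+1 then g r else 0))
       - (\<Sum>r<4*N. (if r = 4*i+2 then g r else 0)) + (\<Sum>r<4*N. (if r = 4*i+3 then g r else 0))"
    by (simp only: sum_subtractf[symmetric] sum.distrib[symmetric]) (rule sum.cong, auto)
  then show ?thesis
    using assms by (simp add: sum.delta')
qed

lemma sum_lower_triangular:
  fixes a :: "nat \<Rightarrow> real"
  assumes "j < N"
  shows "(\<Sum>i<N. (if i = j then 1 else if i < j then -1 else 0) * a i) = a j - (\<Sum>i<j. a i)"
proof -
  have "(\<Sum>i<N. (if i = j then 1 else if i < j then -1 else 0) * a i)
     = (\<Sum>i<N. (if i = j then a i else 0)) - (\<Sum>i<N. (if i < j then a i else 0))"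
    by (simp only: sum_subtractf[symmetric]) (rule sum.cong, auto)
  also have "(\<Sum>i<N. (if i < j then a i else 0)) = (\<Sum>i\<in>{i\<in>{..<N}. i < j}. a i)"
    by (rule sum.inter_filter[symmetric]) simp
  also have "{i\<in>{..<N}. i < j} = {..<j}"
    using assms by auto
  finally show ?thesis
    using assms by (simp add: sum.delta')
qed

lemma relu_bump_at_integer:
  fixes a D :: real and t i :: nat
  assumes "0 \<le> a" "a < D"
  shows "relu (a + D * real t - D * (real i + 1)) - relu (a + D * real t - D * (real i + 2))
           - relu (D * real t - D * (real i + 1)) + relu (D * real t - D * (real i + 2))
         = (if t = i + 1 then a else 0)"
proof -
  have D: "D > 0" using assms by linarith
  consider "t \<le> i" | "t = i + 1" | "t \<ge> i + 2" by linarith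
  then show ?thesis
  proof cases
    case 1
    then have "D * real t \<le> D * real i"
      using D by (simp add: mult_left_mono)
    then have "a + D * real t - D * (real i + 1) \<le> 0" "D * real t - D * (real i + 1) \<le> 0"
      "a + D * real t - D * (real i + 2) \<le> 0" "D * real t - D * (real i + 2) \<le> 0"
      using assms D by (simp_all only: distrib_left mult_1_right; linarith)+
    then show ?thesis
      using 1 by (simp add: relu_def)
  next
    case 2
    then show ?thesis
      using assms by (simp add: relu_def algebra_simps)
  next
    case 3
    then have "D * real t \<ge> D * (real i + 2)"
      using D by (intro mult_left_mono) auto
    then show ?thesis
      using 3 assms by (simp add: relu_def algebra_simps)
  qed
qed

lemma sum_relu_excess_over_prefix:
  fixes a :: "nat \<Rightarrow> real" and h :: real
  assumes "\<And>i. a i = 0 \<or> a i = h" "0 < h"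
  shows "(\<Sum>j<n. relu (a j - (\<Sum>i<j. a i))) = (if \<exists>i<n. a i = h then h else 0)"
proof (induction n)
  case 0
  then show ?case by simp
next
  case (Suc n)
  have nonneg: "\<And>i. 0 \<le> a i"
    using assms by (metis less_eq_real_def)
  show ?case
  proof (cases "\<exists>i<n. a i = h")
    case True
    then obtain k where "k < n" "a k = h" by blast
    then have "h \<le> (\<Sum>i<n. a i)"
      using nonneg by (metis finite_lessThan lessThan_iff member_le_sum)
    moreover have "a n \<le> h"
      using assms(1)[of n] assms(2) by auto
    ultimately have "relu (a n - (\<Sum>i<n. a i)) = 0"
      by (simp add: relu_def)
    then show ?thesis
      using Suc True by auto
  next
    case False
    then have "(\<Sum>i<n. a i) = 0"
      using assms(1) by (metis lessThan_iff sum.neutral)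
    then show ?thesis
      using Suc False nonneg[of n] assms(1)[of n] less_Suc_eq by (auto simp: relu_def)
  qed
qed

lemma dft_0: "dft N v 0 = complex_of_real (1 / real N * (\<Sum>j\<in>{1..N}. v (grid_pt N j)))"
  unfolding dft_def by simp

text \<open>Grid indices run over \<open>1..N\<close>, so a nearest index \<open>0\<close> is replaced by \<open>N\<close>, using periodicity.\<close>
lemma box_per_grid_hit:
  assumes "0 < N" "2 * pi / real N \<le> w" "0 \<le> \<xi>" "\<xi> \<le> 2 * pi"
  shows "\<exists>t\<in>{1..N}. box_per w (grid_pt N t - \<xi>) = 1"
proof -
  define s where "s = \<xi> * real N / (2 * pi)"
  have "0 \<le> s" "s \<le> real N"
    using assms unfolding s_def by (simp_all add: field_simps)
  define t0 where "t0 = nat \<lfloor>s + 1/2\<rfloor>"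
  have near: "\<bar>real t0 - s\<bar> \<le> 1/2"
    unfolding t0_def using \<open>0 \<le> s\<close> floor_correct[of "s + 1/2"] by linarith
  then have "t0 \<le> N"
    using \<open>s \<le> real N\<close> by linarith
  have "\<bar>grid_pt N t0 - \<xi>\<bar> = 2 * pi / real N * \<bar>real t0 - s\<bar>"
    unfolding grid_pt_def s_def using assms(1) by (simp add: field_simps abs_mult)
  also have "\<dots> \<le> 2 * pi / real N * (1/2)"
    using near by (intro mult_left_mono) auto
  also have "\<dots> \<le> w / 2"
    using assms(2) by (simp add: mult.commute)
  finally have close: "\<bar>grid_pt N t0 - \<xi>\<bar> \<le> w / 2" .
  show ?thesis
  proof (cases "t0 = 0")
    case True
    then have "grid_pt N N - \<xi> - 2 * pi * of_int (1::int) = grid_pt N t0 - \<xi>"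
      using assms(1) unfolding grid_pt_def by simp
    then have "box_per w (grid_pt N N - \<xi>) = 1"
      unfolding box_per_def using close by metis
    then show ?thesis
      using assms(1) by auto
  next
    case False
    have "grid_pt N t0 - \<xi> - 2 * pi * of_int (0::int) = grid_pt N t0 - \<xi>"
      by simp
    then have "box_per w (grid_pt N t0 - \<xi>) = 1"
      unfolding box_per_def using close by metis
    then show ?thesis
      using False \<open>t0 \<le> N\<close> by auto
  qed
qed

lemma fno_lift_box_fno:
  assumes "i < N"
  shows "fno_lift (box_fno N D) u x i =
     relu (u x + D * real N / (2*pi) * x - D * (real i + 1))
   - relu (u x + D * real N / (2*pi) * x - D * (real i + 2))
   - relu (D * real N / (2*pi) * x - D * (real i + 1))
   + relu (D * real N / (2*pi) * x - D * (real i + 2))"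
proof -
  have "(4*i) mod 4 = 0" "(4*i+1) mod 4 = 1" "(4*i+2) mod 4 = 2" "(4*i+3) mod 4 = 3"
    "(4*i) div 4 = i" "(4*i+1) div 4 = i" "(4*i+2) div 4 = i" "(4*i+3) div 4 = i"
    "(4*i) mod 2 = 0" "(4*i+1) mod 2 = 1" "(4*i+2) mod 2 = 0" "(4*i+3) mod 2 = 1"
    by presburger+
  then show ?thesis
    unfolding fno_lift_def box_fno_def fno.select_convs sum_four_deltas[OF assms]
    by (simp add: algebra_simps)
qed

lemma sum_grid_fno_lift_box_fno:
  assumes "i < N" "\<And>t. 0 \<le> u (grid_pt N t)" "\<And>t. u (grid_pt N t) < D"
  shows "(\<Sum>t\<in>{1..N}. fno_lift (box_fno N D) u (grid_pt N t) i) = u (grid_pt N (i+1))"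
proof -
  have "D * real N / (2*pi) * grid_pt N t = D * real t" for t
    using assms(1) unfolding grid_pt_def by (simp add: field_simps)
  then have "fno_lift (box_fno N D) u (grid_pt N t) i = (if t = i + 1 then u (grid_pt N t) else 0)"
    for t
    unfolding fno_lift_box_fno[OF assms(1)] using relu_bump_at_integer assms(2,3) by presburger
  then show ?thesis
    using assms(1) by (simp add: sum.delta')
qed

lemma fno_eval_box_fno:
  fixes u :: "real \<Rightarrow> real" and N :: nat and D :: real
  defines "a \<equiv> \<lambda>i. \<Sum>t\<in>{1..N}. fno_lift (box_fno N D) u (grid_pt N t) i"
  assumes "0 < N"
  shows "fno_eval (box_fno N D) N u x = (\<Sum>j<N. relu (a j - (\<Sum>i<j. a i)))"
proof -
  have "fno_layer (box_fno N D) N 0 (fno_lift (box_fno N D) u) x j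
        = relu (\<Sum>i<N. (if i = j then 1 else if i < j then -1 else 0) * a i)" for j
    unfolding fno_layer_def a_def using assms(2)
    by (simp add: dft_0 of_real_mult[symmetric] del: of_real_mult)
  then show ?thesis
    unfolding fno_eval_def by (simp add: sum_lower_triangular)
qed

theorem fno_eval_box_fno_box_per:
  assumes "0 < N" "2 * pi / real N \<le> w" "0 \<le> \<xi>" "\<xi> \<le> 2 * pi" "0 < h" "h < D"
  shows "fno_eval (box_fno N D) N (\<lambda>t. h * box_per w (t - \<xi>)) x = h"
proof -
  define u where "u = (\<lambda>t. h * box_per w (t - \<xi>))"
  have u_vals: "u y = 0 \<or> u y = h" for y
    unfolding u_def box_per_def by simp
  then have "0 \<le> u y" "u y < D" for y
    using assms(5,6) by (metis less_eq_real_def order.strict_trans)+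
  then have samples: "(\<Sum>t\<in>{1..N}. fno_lift (box_fno N D) u (grid_pt N t) i) = u (grid_pt N (i+1))"
    if "i < N" for i
    using that by (intro sum_grid_fno_lift_box_fno)
  have "fno_eval (box_fno N D) N u x
        = (\<Sum>j<N. relu (u (grid_pt N (j+1)) - (\<Sum>i<j. u (grid_pt N (i+1)))))"
    using assms(1) by (simp add: fno_eval_box_fno samples[simplified] cong: sum.cong_simp)
  also have "\<dots> = (if \<exists>i<N. u (grid_pt N (i+1)) = h then h else 0)"
    using u_vals assms(5) by (rule sum_relu_excess_over_prefix)
  also have "\<dots> = h"
  proof -
    obtain t where "t \<in> {1..N}" "box_per w (grid_pt N t - \<xi>) = 1"
      using box_per_grid_hit[OF assms(1-4)] by blast
    then have "t - 1 < N" "u (grid_pt N (t - 1 + 1)) = h"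
      unfolding u_def by auto
    then show ?thesis by auto
  qed
  finally show ?thesis
    unfolding u_def .
qed

lemma one_le_ln_inverse_sq:
  fixes \<epsilon> :: real
  assumes "0 < \<epsilon>" "\<epsilon> \<le> 1/2"
  shows "1 \<le> (ln (1 / \<epsilon>))\<^sup>2 / (ln 2)\<^sup>2"
proof -
  have "2 \<le> 1 / \<epsilon>"
    using assms by (simp add: field_simps)
  then have "ln 2 \<le> ln (1 / \<epsilon>)"
    using assms by simp
  then have "(ln 2)\<^sup>2 \<le> (ln (1 / \<epsilon>))\<^sup>2"
    by (intro power_mono) auto
  then show ?thesis
    by simp
qed

theorem mainTheorem14:
  fixes hl hu wl wu :: real and N :: nat
  assumes "0 < hl" "hl \<le> hu" "0 < wl" "wl \<le> wu" "wu < 2 * pi"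
    and "0 < N" and "2 * pi / real N \<le> wl"
  shows "\<exists>C>0. \<forall>\<epsilon>::real. 0 < \<epsilon> \<and> \<epsilon> \<le> 1/2 \<longrightarrow>
           (\<exists>F::fno. fno_kmax F = 0 \<and> real (fno_dv F) \<le> C \<and>
              real (fno_depth F) \<le> C * (ln (1 / \<epsilon>))\<^sup>2 \<and>
              (\<forall>h w \<xi>. h \<in> {hl..hu} \<longrightarrow> w \<in> {wl..wu} \<longrightarrow> \<xi> \<in> {0..2*pi} \<longrightarrow>
                 (\<forall>x y. fno_eval F N (\<lambda>t. h * box_per w (t - \<xi>)) x
                       = fno_eval F N (\<lambda>t. h * box_per w (t - \<xi>)) y) \<and>
                 (\<forall>x. \<bar>fno_eval F N (\<lambda>t. h * box_per w (t - \<xi>)) x - h\<bar> \<le> \<epsilon>)))"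
proof -
  define C where "C = real N + 1 / (ln 2)\<^sup>2"
  have exact: "fno_eval (box_fno N (hu + 1)) N (\<lambda>t. h * box_per w (t - \<xi>)) x = h"
    if "h \<in> {hl..hu}" "w \<in> {wl..wu}" "\<xi> \<in> {0..2*pi}" for h w \<xi> x
    using that assms by (intro fno_eval_box_fno_box_per) auto
  have depth: "1 \<le> C * (ln (1 / \<epsilon>))\<^sup>2" if "0 < \<epsilon>" "\<epsilon> \<le> 1/2" for \<epsilon> :: real
  proof -
    have "1 \<le> (ln (1 / \<epsilon>))\<^sup>2 / (ln 2)\<^sup>2"
      using one_le_ln_inverse_sq[OF that] .
    also have "\<dots> \<le> C * (ln (1 / \<epsilon>))\<^sup>2"
      unfolding C_def by (simp add: distrib_right)
    finally show ?thesis .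
  qed
  have "C > 0"
    unfolding C_def by (simp add: add_nonneg_pos)
  then show ?thesis
    using exact depth by (intro exI[of _ C] conjI allI impI exI[of _ "box_fno N (hu + 1)"])
      (auto simp: C_def)
qed

end
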